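(* Let $R$ be a $*$-ring and $e$ a projection in $R$. If $R$ is a generalized weakly Rickart $*$-ring, then so is $eRe$.
   Context: A $*$-ring is an associative ring $R$ with an involution $x\mapsto x^*$ (additive, $(xy)^*=y^*x^*$, $x^{**}=x$). A projection is an element $e$ with $e=e^*=e^2$; $eRe=\{exe: x\in R\}$ is a $*$-subring. In a $*$-ring $S$, a projection $f\in S$ is a generalized right projection of $x\in S$ if there exists $n\in\mathbb N$ with $x^nf=x^n$ and, for all $y\in S$, $x^ny=0$ implies $fy=0$. $S$ is a generalized weakly Rickart $*$-ring if every element of $S$ has a generalized right projection in $S$. *)

theory Defs
  imports Main
begin

text \<open>Rings are associative, not necessarily unital (Isabelle class ring has no 1).
  The involution is an explicit function argument.\<close>

definition star_ring :: "('a::ring \<Rightarrow> 'a) \<Rightarrow> bool" where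
  "star_ring st \<longleftrightarrow>
     (\<forall>x y. st (x + y) = st x + st y) \<and>
     (\<forall>x y. st (x * y) = st y * st x) \<and>
     (\<forall>x. st (st x) = x)"

definition is_projection :: "('a::ring \<Rightarrow> 'a) \<Rightarrow> 'a \<Rightarrow> bool" where
  "is_projection st e \<longleftrightarrow> e = st e \<and> e = e * e"

text \<open>Positive powers in a non-unital ring: npow n x = x^(n+1).\<close>
fun npow :: "nat \<Rightarrow> 'a::ring \<Rightarrow> 'a" where
  "npow 0 x = x"
| "npow (Suc n) x = x * npow n x"

definition corner :: "'a::ring \<Rightarrow> 'a set" where
  "corner e = {e * x * e | x. True}"

definition gen_right_proj :: "('a::ring \<Rightarrow> 'a) \<Rightarrow> 'a set \<Rightarrow> 'a \<Rightarrow> 'a \<Rightarrow> bool" where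
  "gen_right_proj st S x f \<longleftrightarrow>
     f \<in> S \<and> is_projection st f \<and>
     (\<exists>n. npow n x * f = npow n x \<and> (\<forall>y\<in>S. npow n x * y = 0 \<longrightarrow> f * y = 0))"

definition gen_weakly_rickart :: "('a::ring \<Rightarrow> 'a) \<Rightarrow> 'a set \<Rightarrow> bool" where
  "gen_weakly_rickart st S \<longleftrightarrow> (\<forall>x\<in>S. \<exists>f. gen_right_proj st S x f)"

end

theory Submission
  imports Defs
begin

text \<open>Let \<open>x \<in> eRe\<close> and let \<open>f\<close> be a generalized right projection of \<open>x\<close> in \<open>R\<close>, with
  exponent \<open>n\<close>. Since \<open>x\<^sup>n e = x\<^sup>n\<close>, the element \<open>f - ef\<close> is annihilated by \<open>x\<^sup>n\<close>, hence
  by \<open>f\<close>, so \<open>fef = f\<close>. This makes \<open>efe\<close> a projection of \<open>eRe\<close>; it is a right unit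
  for \<open>x\<^sup>n\<close>, and it kills every \<open>y \<in> eRe\<close> with \<open>x\<^sup>n y = 0\<close> because \<open>ey = y\<close> and \<open>fy = 0\<close>.\<close>

lemma star_ring_mult:
  assumes "star_ring st"
  shows "st (x * y) = st y * st x"
  using assms unfolding star_ring_def by blast

lemma npow_mult_right_unit:
  fixes x :: "'a::ring"
  assumes "x * e = x"
  shows "npow n x * e = npow n x"
  using assms by (induction n) (auto simp: mult.assoc)

lemma corner_memI: "e * x * e \<in> corner e"
  unfolding corner_def by blast

lemma corner_mult_left_unit:
  assumes "e * e = e" and "y \<in> corner e"
  shows "e * y = y"
  using assms unfolding corner_def by (auto simp flip: mult.assoc)

lemma corner_mult_right_unit:
  assumes "e * e = e" and "y \<in> corner e"
  shows "y * e = y"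
  using assms unfolding corner_def by (auto simp: mult.assoc)

lemma is_projection_compress:
  assumes "star_ring st" "is_projection st e" "is_projection st f" "f * e * f = f"
  shows "is_projection st (e * f * e)"
proof -
  have e: "st e = e" "e * e = e" and f: "st f = f"
    using assms(2,3) unfolding is_projection_def by auto
  have "e * f * e * (e * f * e) = e * (f * (e * e) * f) * e"
    by (simp add: mult.assoc)
  also have "\<dots> = e * f * e"
    using assms(4) e by simp
  finally show ?thesis
    unfolding is_projection_def using e f star_ring_mult[OF assms(1)]
    by (simp add: mult.assoc)
qed

lemma gen_right_proj_absorbs:
  assumes f: "gen_right_proj st UNIV x f" and "x * e = x"
  shows "f * e * f = f"
proof -
  obtain n where fx: "npow n x * f = npow n x"
    and ann: "\<And>y. npow n x * y = 0 \<Longrightarrow> f * y = 0"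
    using f unfolding gen_right_proj_def by blast
  have ff: "f * f = f"
    using f unfolding gen_right_proj_def is_projection_def by auto
  have "npow n x * (f - e * f) = 0"
    using npow_mult_right_unit[OF \<open>x * e = x\<close>, of n] fx
    by (simp add: right_diff_distrib flip: mult.assoc)
  then have "f * (f - e * f) = 0"
    by (rule ann)
  then show ?thesis
    using ff by (simp add: right_diff_distrib mult.assoc)
qed

lemma gen_right_proj_corner:
  assumes "star_ring st" and e: "is_projection st e"
    and f: "gen_right_proj st UNIV x f" and x: "x \<in> corner e"
  shows "gen_right_proj st (corner e) x (e * f * e)"
proof -
  have ee: "e * e = e"
    using e unfolding is_projection_def by auto
  have xe: "x * e = x"
    using corner_mult_right_unit[OF ee x] .
  obtain n where fx: "npow n x * f = npow n x"
    and ann: "\<And>y. npow n x * y = 0 \<Longrightarrow> f * y = 0"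
    using f unfolding gen_right_proj_def by blast
  have proj: "is_projection st (e * f * e)"
    using is_projection_compress[OF assms(1) e _ gen_right_proj_absorbs[OF f xe]] f
    unfolding gen_right_proj_def by blast
  have unit: "npow n x * (e * f * e) = npow n x"
    using npow_mult_right_unit[OF xe, of n] fx by (simp flip: mult.assoc)
  have "e * f * e * y = 0" if "y \<in> corner e" "npow n x * y = 0" for y
    using corner_mult_left_unit[OF ee that(1)] ann[OF that(2)]
    by (metis mult.assoc mult_zero_right)
  then show ?thesis
    unfolding gen_right_proj_def using corner_memI proj unit by blast
qed

theorem mainTheorem12:
  fixes st :: "'a::ring \<Rightarrow> 'a" and e :: 'a
  assumes "star_ring st"
    and "is_projection st e"
    and "gen_weakly_rickart st UNIV"
  shows "gen_weakly_rickart st (corner e)"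
  unfolding gen_weakly_rickart_def
proof
  fix x
  assume "x \<in> corner e"
  obtain f where "gen_right_proj st UNIV x f"
    using assms(3) unfolding gen_weakly_rickart_def by blast
  then show "\<exists>g. gen_right_proj st (corner e) x g"
    using gen_right_proj_corner[OF assms(1,2) _ \<open>x \<in> corner e\<close>] by blast
qed

end
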